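(* Let $\Omega$ be a circle domain with $\infty\in\Omega$, with boundary circles $\gamma_j$, open complementary disks $B_j$ bounded by $\gamma_j$, and reflections $R_j$ across $\gamma_j$. Then $$\sup\big\{\mathrm{Area}\big(R_{i_1}\circ\dots\circ R_{i_k}(B_{i_{k+1}})\big): i_1,\dots,i_{k+1} \text{ with } i_j\ne i_{j+1}\big\}\longrightarrow0\quad\text{as }k\to\infty;$$ that is, the area of the disks in the complement of $\overline{\Omega_k}=\bigcup_{l(T)\le k}T(\overline\Omega)$ tends to zero as $k\to\infty$.
   Context: A circle domain is a domain in $\widehat{\mathbb C}$ each boundary component of which is a geometric circle or a point. $B_j$ denotes the open disk with $\partial B_j=\gamma_j$ and $B_j\cap\Omega=\emptyset$. $\Gamma(\Omega)$ is the group generated by the $R_j$; each $T\in\Gamma(\Omega)\setminus\{\mathrm{id}\}$ has a unique reduced form $R_{i_1}\circ\dots\circ R_{i_k}$ with consecutive indices distinct, and $l(T)=k$ ($l(\mathrm{id})=0$). Area is Euclidean area. *)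

theory Defs
  imports "HOL-Analysis.Analysis"
begin

text \<open>A circle domain containing \<infinity>, represented by its finite part \<Omega> \<subseteq> \<complex>:
  \<Omega> is open and connected, its complement in \<complex> is bounded (i.e. \<infinity> is an interior
  point in the Riemann sphere), and every connected component of its boundary is
  either a point or a geometric circle.\<close>
definition circle_domain_inf :: "complex set \<Rightarrow> bool" where
  "circle_domain_inf \<Omega> \<longleftrightarrow> open \<Omega> \<and> connected \<Omega> \<and> bounded (- \<Omega>) \<and>
     (\<forall>K \<in> components (frontier \<Omega>).
        (\<exists>z. K = {z}) \<or> (\<exists>c r. 0 < r \<and> K = sphere c r))"

definition boundary_circles :: "complex set \<Rightarrow> (complex \<times> real) set" where
  "boundary_circles \<Omega> = {(c, r). 0 < r \<and> sphere c r \<in> components (frontier \<Omega>)}"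

definition refl_circle :: "complex \<Rightarrow> real \<Rightarrow> complex \<Rightarrow> complex" where
  "refl_circle c r z = c + complex_of_real (r\<^sup>2) / cnj (z - c)"

definition refl_word :: "(complex \<times> real) list \<Rightarrow> complex \<Rightarrow> complex" where
  "refl_word ws = foldr (\<lambda>(c, r) f. refl_circle c r \<circ> f) ws id"

text \<open>Image disk R_{i_1} \<circ> ... \<circ> R_{i_k}(B_{i_{k+1}}) for the list [i_1, ..., i_{k+1}].\<close>
definition word_disk :: "(complex \<times> real) list \<Rightarrow> complex set" where
  "word_disk ws = refl_word (butlast ws) ` ball (fst (last ws)) (snd (last ws))"

end

theory Submission
  imports Defs
begin

text \<open>Distinct boundary circles of \<Omega> bound disjoint closed disks, and for every t > 0 only
  finitely many of them have radius at least t. On the disk B_q the reflection R_p is Lipschitz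
  with constant (r_p / (|c_p - c_q| - r_q))^2 < 1, and a word R_{i_1} \<circ> ... \<circ> R_{i_k} maps
  B_{i_{k+1}} into B_{i_1}. So if some letter of the word is a circle of radius < t, cutting the
  word there shows that the word disk lies in a disk of radius < t. Otherwise all letters come
  from the finite family of circles of radius \<ge> t, whose contraction constants are bounded by
  some q < 1, and the word disk has radius at most q^k times the largest radius.\<close>

lemma dist_refl_circle_center: "dist (refl_circle c r z) c = r\<^sup>2 / dist z c"
  by (simp add: refl_circle_def dist_norm norm_divide norm_power complex_cnj_diff[symmetric]
      del: complex_cnj_diff)

lemma refl_circle_image_ball:
  assumes "0 < r" "r + s \<le> dist c d"
  shows "refl_circle c r ` ball d s \<subseteq> ball c r"
proof
  fix y assume "y \<in> refl_circle c r ` ball d s"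
  then obtain z where z: "z \<in> ball d s" "y = refl_circle c r z" by blast
  have "r < dist z c"
    using z assms dist_triangle[of c d z] by (auto simp: dist_commute)
  then have "r\<^sup>2 / dist z c < r"
    using assms by (simp add: power2_eq_square divide_less_eq)
  then show "y \<in> ball c r"
    using z dist_refl_circle_center[of c r z] by (simp add: dist_commute)
qed

lemma lipschitz_on_refl_circle_outside_ball:
  assumes "0 < \<rho>"
  shows "((r / \<rho>)\<^sup>2)-lipschitz_on (- ball c \<rho>) (refl_circle c r)"
proof (rule lipschitz_onI)
  fix z w assume "z \<in> - ball c \<rho>" "w \<in> - ball c \<rho>"
  then have a: "\<rho> \<le> norm (z - c)" and b: "\<rho> \<le> norm (w - c)"
    by (auto simp: dist_norm norm_minus_commute)
  with assms have "z - c \<noteq> 0" "w - c \<noteq> 0" by auto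
  then have "refl_circle c r z - refl_circle c r w
      = complex_of_real (r\<^sup>2) * cnj (w - z) / (cnj (z - c) * cnj (w - c))"
    by (simp add: refl_circle_def field_simps)
  then have "dist (refl_circle c r z) (refl_circle c r w) = r\<^sup>2 * dist z w / (norm (z - c) * norm (w - c))"
    by (simp add: dist_norm norm_mult norm_divide norm_power complex_cnj_diff[symmetric] del: complex_cnj_diff)
       (simp add: norm_minus_commute)
  also have "\<dots> \<le> r\<^sup>2 * dist z w / (\<rho> * \<rho>)"
    using a b assms by (intro divide_left_mono mult_mono mult_pos_pos) auto
  also have "\<dots> = (r / \<rho>)\<^sup>2 * dist z w"
    by (simp add: power2_eq_square)
  finally show "dist (refl_circle c r z) (refl_circle c r w) \<le> (r / \<rho>)\<^sup>2 * dist z w" .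
qed simp

lemma lipschitz_on_refl_circle_ball:
  assumes "s < dist c d"
  shows "((r / (dist c d - s))\<^sup>2)-lipschitz_on (ball d s) (refl_circle c r)"
proof (rule lipschitz_on_subset[OF lipschitz_on_refl_circle_outside_ball])
  show "ball d s \<subseteq> - ball c (dist c d - s)"
  proof
    fix y assume "y \<in> ball d s"
    then show "y \<in> - ball c (dist c d - s)"
      using dist_triangle[of c d y] by (simp add: dist_commute)
  qed
qed (use assms in simp)

lemma lipschitz_on_image_ball_subset_cball:
  assumes "C-lipschitz_on (ball c r) f" "0 < r"
  shows "f ` ball c r \<subseteq> cball (f c) (C * r)"
proof
  fix y assume "y \<in> f ` ball c r"
  then obtain z where z: "z \<in> ball c r" "y = f z" by blast
  have "dist (f c) (f z) \<le> C * dist c z"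
    using assms z by (intro lipschitz_onD) auto
  also have "\<dots> \<le> C * r"
    using z lipschitz_on_nonneg[OF assms(1)] by (intro mult_left_mono) auto
  finally show "y \<in> cball (f c) (C * r)" using z by simp
qed

lemma cball_disjoint_imp_dist_gt:
  fixes a b :: "'a::real_normed_vector"
  assumes "cball a r \<inter> cball b s = {}" "0 \<le> r" "0 \<le> s"
  shows "r + s < dist a b"
proof (rule ccontr)
  assume le: "\<not> r + s < dist a b"
  show False
  proof (cases "r + s = 0")
    case True
    with assms(2,3) le have "dist a b \<le> r" "0 \<le> s" by linarith+
    then have "b \<in> cball a r \<inter> cball b s" by simp
    with assms show False by blast
  next
    case False
    then have rs: "0 < r + s" using assms by linarith
    define x where "x = a + (r / (r + s)) *\<^sub>R (b - a)"
    have "1 - r / (r + s) = s / (r + s)"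
      using rs by (simp add: field_simps)
    moreover have "b - x = (1 - r / (r + s)) *\<^sub>R (b - a)"
      by (simp add: x_def algebra_simps)
    ultimately have "x - a = (r / (r + s)) *\<^sub>R (b - a)" "b - x = (s / (r + s)) *\<^sub>R (b - a)"
      by (simp_all add: x_def)
    then have "dist x a = r / (r + s) * dist a b" "dist b x = s / (r + s) * dist a b"
      using assms rs by (simp_all add: dist_norm norm_minus_commute[of a b])
    moreover have "r / (r + s) * dist a b \<le> r / (r + s) * (r + s)"
      and "s / (r + s) * dist a b \<le> s / (r + s) * (r + s)"
      using assms le by (intro mult_left_mono; simp)+
    ultimately have "x \<in> cball a r \<inter> cball b s"
      using rs by (simp add: dist_commute)
    then show False using assms by blast
  qed
qed

definition separated_disks :: "(complex \<times> real) set \<Rightarrow> bool" where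
  "separated_disks P \<longleftrightarrow> (\<forall>p\<in>P. 0 < snd p) \<and>
     (\<forall>p\<in>P. \<forall>q\<in>P. p \<noteq> q \<longrightarrow> snd p + snd q < dist (fst p) (fst q))"

definition refl_contraction :: "complex \<times> real \<Rightarrow> complex \<times> real \<Rightarrow> real" where
  "refl_contraction p q = (snd p / (dist (fst p) (fst q) - snd q))\<^sup>2"

lemma separated_disks_radius_pos: "separated_disks P \<Longrightarrow> p \<in> P \<Longrightarrow> 0 < snd p"
  unfolding separated_disks_def by auto

lemma separated_disks_dist:
  "separated_disks P \<Longrightarrow> p \<in> P \<Longrightarrow> q \<in> P \<Longrightarrow> p \<noteq> q \<Longrightarrow> snd p + snd q < dist (fst p) (fst q)"
  unfolding separated_disks_def by auto

lemma refl_contraction_lt_1: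
  assumes "separated_disks P" "p \<in> P" "q \<in> P" "p \<noteq> q"
  shows "refl_contraction p q < 1"
proof -
  have "0 < snd p" "snd p < dist (fst p) (fst q) - snd q"
    using separated_disks_radius_pos[OF assms(1,2)] separated_disks_dist[OF assms] by auto
  then show ?thesis
    unfolding refl_contraction_def by (simp add: power_less_one_iff abs_less_iff)
qed

lemma refl_word_Nil [simp]: "refl_word [] = id"
  by (simp add: refl_word_def)

lemma refl_word_Cons [simp]: "refl_word (p # ws) = refl_circle (fst p) (snd p) \<circ> refl_word ws"
  by (cases p) (simp add: refl_word_def)

lemma refl_word_append: "refl_word (ws @ vs) = refl_word ws \<circ> refl_word vs"
  by (induction ws) auto

lemma word_disk_singleton [simp]: "word_disk [p] = ball (fst p) (snd p)"
  by (simp add: word_disk_def)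

lemma word_disk_Cons:
  assumes "ws \<noteq> []"
  shows "word_disk (p # ws) = refl_circle (fst p) (snd p) ` word_disk ws"
  using assms by (simp add: word_disk_def image_comp)

lemma word_disk_append:
  assumes "ws \<noteq> []" "vs \<noteq> []"
  shows "word_disk (ws @ vs) = refl_word (butlast ws) ` word_disk (last ws # vs)"
proof -
  have "butlast (ws @ vs) = butlast ws @ last ws # butlast vs"
    using assms by (simp add: butlast_append)
  then show ?thesis
    using assms by (simp add: word_disk_def refl_word_append image_comp)
qed

lemma word_disk_subset_ball_hd:
  assumes "separated_disks P" "set ws \<subseteq> P" "successively (\<noteq>) ws" "ws \<noteq> []"
  shows "word_disk ws \<subseteq> ball (fst (hd ws)) (snd (hd ws))"
  using assms(2-4)
proof (induction ws rule: induct_list012)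
  case (3 p q rest)
  then have "word_disk (q # rest) \<subseteq> ball (fst q) (snd q)" by simp
  moreover have pq: "p \<in> P" "q \<in> P" "p \<noteq> q" using "3.prems"(1,2) by auto
  then have "refl_circle (fst p) (snd p) ` ball (fst q) (snd q) \<subseteq> ball (fst p) (snd p)"
    using separated_disks_radius_pos[OF assms(1) pq(1)] separated_disks_dist[OF assms(1) pq]
    by (intro refl_circle_image_ball) auto
  ultimately show ?case
    by (auto simp: word_disk_Cons)
qed auto

lemma word_disk_append_subset:
  assumes "separated_disks P" "set (ws @ vs) \<subseteq> P" "successively (\<noteq>) (ws @ vs)" "ws \<noteq> []"
  shows "word_disk (ws @ vs) \<subseteq> word_disk ws"
proof (cases "vs = []")
  case False
  have "set (last ws # vs) \<subseteq> P" "successively (\<noteq>) (last ws # vs)"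
    using assms False by (cases vs; auto simp: successively_append_iff)+
  then have "word_disk (last ws # vs) \<subseteq> ball (fst (last ws)) (snd (last ws))"
    using word_disk_subset_ball_hd[OF assms(1)] by fastforce
  from image_mono[OF this, of "refl_word (butlast ws)"] show ?thesis
    unfolding word_disk_append[OF assms(4) False] by (simp add: word_disk_def[of ws])
qed simp

lemma lipschitz_on_refl_word_butlast:
  assumes "separated_disks P" "set ws \<subseteq> P"
    and "successively (\<lambda>p q. p \<noteq> q \<and> refl_contraction p q \<le> L) ws" "ws \<noteq> []" "0 \<le> L"
  shows "(L ^ (length ws - 1))-lipschitz_on (ball (fst (last ws)) (snd (last ws)))
           (refl_word (butlast ws))"
  using assms(2-4)
proof (induction ws rule: induct_list012)
  case (2 p)
  show ?case by (simp add: id_def lipschitz_on_id)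
next
  case (3 p q rest)
  let ?B = "ball (fst (last (q # rest))) (snd (last (q # rest)))"
  let ?T = "refl_word (butlast (q # rest))"
  have pq: "p \<in> P" "q \<in> P" "p \<noteq> q" and L: "refl_contraction p q \<le> L"
    using "3.prems"(1,2) by auto
  have succ: "successively (\<lambda>p q. p \<noteq> q \<and> refl_contraction p q \<le> L) (q # rest)"
    using "3.prems"(2) by simp
  then have "successively (\<noteq>) (q # rest)"
    by (rule successively_mono) simp
  moreover have "set (q # rest) \<subseteq> P"
    using "3.prems"(1) by simp
  ultimately have "word_disk (q # rest) \<subseteq> ball (fst q) (snd q)"
    using word_disk_subset_ball_hd[OF assms(1)] by (metis list.sel(1) list.simps(3))
  then have image: "?T ` ?B \<subseteq> ball (fst q) (snd q)"
    by (simp only: word_disk_def)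
  have IH: "(L ^ length rest)-lipschitz_on ?B ?T"
    using "3.IH"(2) "3.prems"(1) succ by simp
  have "(refl_contraction p q)-lipschitz_on (ball (fst q) (snd q)) (refl_circle (fst p) (snd p))"
    unfolding refl_contraction_def
    using separated_disks_dist[OF assms(1) pq] separated_disks_radius_pos[OF assms(1) pq(1)]
    by (intro lipschitz_on_refl_circle_ball) simp
  then have "(refl_contraction p q * L ^ length rest)-lipschitz_on ?B (refl_circle (fst p) (snd p) \<circ> ?T)"
    by (intro lipschitz_on_compose[OF IH] lipschitz_on_subset[OF _ image])
  moreover have "refl_contraction p q * L ^ length rest \<le> L ^ Suc (length rest)"
    using L assms(5) by (simp add: mult_right_mono)
  ultimately show ?case
    by (simp add: lipschitz_on_mono)
qed auto

lemma word_disk_subset_cball: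
  assumes "separated_disks P" "set ws \<subseteq> P"
    and "successively (\<lambda>p q. p \<noteq> q \<and> refl_contraction p q \<le> L) ws" "ws \<noteq> []" "0 \<le> L"
  shows "\<exists>x. word_disk ws \<subseteq> cball x (L ^ (length ws - 1) * snd (last ws))"
proof -
  have "last ws \<in> P"
    using assms(2,4) by auto
  then have "0 < snd (last ws)"
    by (rule separated_disks_radius_pos[OF assms(1)])
  then show ?thesis
    unfolding word_disk_def
    using lipschitz_on_image_ball_subset_cball[OF lipschitz_on_refl_word_butlast[OF assms]] by blast
qed

lemma sphere_eq_sphere_iff:
  fixes c d :: "'a::euclidean_space"
  assumes "0 < r" "0 < s"
  shows "sphere c r = sphere d s \<longleftrightarrow> c = d \<and> r = s"
proof
  assume "sphere c r = sphere d s"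
  then have "ball c r = ball d s"
    using inside_frontier_eq_interior[of "cball c r"] inside_frontier_eq_interior[of "cball d s"]
    by simp
  then show "c = d \<and> r = s"
    using assms by (simp add: ball_eq_ball_iff)
qed simp

lemma boundary_circle_cball_disjoint:
  assumes "circle_domain_inf \<Omega>" "(c, r) \<in> boundary_circles \<Omega>"
  shows "cball c r \<inter> \<Omega> = {}"
proof -
  have \<Omega>: "open \<Omega>" "connected \<Omega>" "bounded (- \<Omega>)"
    using assms(1) by (auto simp: circle_domain_inf_def)
  have "sphere c r \<subseteq> frontier \<Omega>"
    using assms(2) in_components_subset by (auto simp: boundary_circles_def)
  then have "\<Omega> \<inter> frontier (cball c r) = {}"
    using frontier_disjoint_eq[of \<Omega>] \<Omega>(1) by auto
  \<comment> \<open>This is where \<infinity> \<in> \<Omega> enters: \<Omega> is unbounded, so it is not inside the disk.\<close>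
  moreover have "\<Omega> - cball c r \<noteq> {}"
  proof
    assume "\<Omega> - cball c r = {}"
    then have "bounded \<Omega>"
      using bounded_cball bounded_subset by blast
    then have "bounded (\<Omega> \<union> - \<Omega>)"
      using \<Omega>(3) by (simp only: bounded_Un)
    then show False by simp
  qed
  ultimately show ?thesis
    using connected_Int_frontier[OF \<Omega>(2)] by blast
qed

lemma boundary_circle_subset_closure:
  "(c, r) \<in> boundary_circles \<Omega> \<Longrightarrow> sphere c r \<subseteq> closure \<Omega>"
  using in_components_subset closure_Un_frontier[of \<Omega>] by (fastforce simp: boundary_circles_def)

lemma boundary_circles_sphere_disjoint_cball:
  assumes "circle_domain_inf \<Omega>" "(c, r) \<in> boundary_circles \<Omega>" "(d, s) \<in> boundary_circles \<Omega>"
    and "(c, r) \<noteq> (d, s)"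
  shows "sphere d s \<inter> cball c r = {}"
proof -
  have comps: "sphere c r \<in> components (frontier \<Omega>)" "sphere d s \<in> components (frontier \<Omega>)"
    and "0 < r" "0 < s"
    using assms(2,3) by (auto simp: boundary_circles_def)
  then have "sphere c r \<noteq> sphere d s"
    using sphere_eq_sphere_iff assms(4) by blast
  then have "sphere d s \<inter> sphere c r = {}"
    using components_nonoverlap[OF comps] by blast
  moreover have "ball c r \<inter> \<Omega> = {}"
    using boundary_circle_cball_disjoint[OF assms(1,2)] ball_subset_cball by blast
  then have "sphere d s \<inter> ball c r = {}"
    using boundary_circle_subset_closure[OF assms(3)] open_Int_closure_eq_empty[of "ball c r" \<Omega>]
    by auto
  ultimately show ?thesis
    using cball_diff_eq_sphere[of c r] by blast
qed

lemma boundary_circles_separated: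
  assumes "circle_domain_inf \<Omega>"
  shows "separated_disks (boundary_circles \<Omega>)"
  unfolding separated_disks_def
proof (intro conjI ballI impI)
  fix p assume "p \<in> boundary_circles \<Omega>"
  then show "0 < snd p" by (auto simp: boundary_circles_def)
next
  fix p q assume pq: "p \<in> boundary_circles \<Omega>" "q \<in> boundary_circles \<Omega>" "p \<noteq> q"
  obtain c r d s where p: "p = (c, r)" and q: "q = (d, s)" by fastforce
  have cr: "(c, r) \<in> boundary_circles \<Omega>" and ds: "(d, s) \<in> boundary_circles \<Omega>"
    and neq: "(c, r) \<noteq> (d, s)"
    using pq p q by auto
  have "0 < r" "0 < s"
    using cr ds by (auto simp: boundary_circles_def)
  have disj: "sphere d s \<inter> cball c r = {}" "sphere c r \<inter> cball d s = {}"
    using boundary_circles_sphere_disjoint_cball[OF assms cr ds neq]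
      boundary_circles_sphere_disjoint_cball[OF assms ds cr neq[symmetric]] by auto
  have "c + of_real r \<in> sphere c r"
    using \<open>0 < r\<close> by (simp add: dist_norm)
  then have "cball c r - cball d s \<noteq> {}"
    using disj(2) sphere_cball[of c r] by blast
  moreover have "cball c r \<inter> frontier (cball d s) = {}"
    using disj(1) by auto
  ultimately have "cball c r \<inter> cball d s = {}"
    using connected_Int_frontier[OF connected_cball, of c r "cball d s"] by auto
  then have "r + s < dist c d"
    using \<open>0 < r\<close> \<open>0 < s\<close> by (intro cball_disjoint_imp_dist_gt) simp_all
  then show "snd p + snd q < dist (fst p) (fst q)"
    by (simp add: p q)
qed

lemma finite_boundary_circles_radius_ge:
  assumes "circle_domain_inf \<Omega>" "0 < t"
  shows "finite {p \<in> boundary_circles \<Omega>. t \<le> snd p}" (is "finite ?F")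
proof -
  have sep: "separated_disks (boundary_circles \<Omega>)"
    by (rule boundary_circles_separated[OF assms(1)])
  have "fst p \<notin> \<Omega>" if "p \<in> boundary_circles \<Omega>" for p
  proof -
    have "fst p \<in> cball (fst p) (snd p)"
      using separated_disks_radius_pos[OF sep that] by simp
    moreover have "cball (fst p) (snd p) \<inter> \<Omega> = {}"
      using boundary_circle_cball_disjoint[OF assms(1), of "fst p" "snd p"] that by simp
    ultimately show ?thesis by blast
  qed
  then have "fst ` ?F \<subseteq> - \<Omega>"
    by blast
  moreover have "bounded (- \<Omega>)"
    using assms(1) by (simp add: circle_domain_inf_def)
  ultimately have "bounded (fst ` ?F)"
    by (rule bounded_subset[rotated])
  moreover have "uniform_discrete (fst ` ?F)"
  proof (rule uniformI2[of "2 * t"])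
    fix x y assume "x \<in> fst ` ?F" "y \<in> fst ` ?F" "x \<noteq> y"
    then obtain p q where "p \<in> ?F" "q \<in> ?F" "x = fst p" "y = fst q"
      by blast
    moreover from this have "snd p + snd q < dist (fst p) (fst q)"
      using \<open>x \<noteq> y\<close> by (intro separated_disks_dist[OF sep]) auto
    ultimately show "2 * t \<le> dist x y"
      by simp
  qed (use assms(2) in simp)
  ultimately have "finite (fst ` ?F)"
    using uniform_discrete_finite_iff by blast
  moreover have "inj_on fst ?F"
  proof (rule inj_onI, rule ccontr)
    fix p q assume "p \<in> ?F" "q \<in> ?F" "fst p = fst q" "p \<noteq> q"
    then show False
      using separated_disks_dist[OF sep, of p q] separated_disks_radius_pos[OF sep, of p]
        separated_disks_radius_pos[OF sep, of q] by simp
  qed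
  ultimately show ?thesis
    by (rule finite_imageD)
qed

lemma separated_disks_subset: "separated_disks P \<Longrightarrow> Q \<subseteq> P \<Longrightarrow> separated_disks Q"
  unfolding separated_disks_def by blast

lemma finite_separated_disks_contraction_bound:
  assumes "separated_disks F" "finite F"
  obtains q where "0 \<le> q" "q < 1"
    and "\<And>a b. a \<in> F \<Longrightarrow> b \<in> F \<Longrightarrow> a \<noteq> b \<Longrightarrow> refl_contraction a b \<le> q"
proof -
  define Q where
    "Q = insert 0 ((\<lambda>x. refl_contraction (fst x) (snd x)) ` {x \<in> F \<times> F. fst x \<noteq> snd x})"
  have "finite Q"
    using assms(2) by (simp add: Q_def)
  have "y < 1" if "y \<in> Q" for y
    using that refl_contraction_lt_1[OF assms(1)] by (force simp: Q_def mem_Times_iff)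
  moreover have "Max Q \<in> Q"
    using \<open>finite Q\<close> by (rule Max_in) (simp add: Q_def)
  moreover have "refl_contraction a b \<le> Max Q" if "a \<in> F" "b \<in> F" "a \<noteq> b" for a b
    using \<open>finite Q\<close> that by (intro Max_ge) (force simp: Q_def)+
  moreover have "0 \<le> Max Q"
    using \<open>finite Q\<close> by (simp add: Q_def)
  ultimately show ?thesis
    using that by blast
qed

lemma eventually_word_disks_in_small_cball:
  assumes sep: "separated_disks P" and fin: "finite {p \<in> P. t \<le> snd p}" and "0 < t"
  shows "\<forall>\<^sub>F k in sequentially. \<forall>ws. length ws = Suc k \<and> set ws \<subseteq> P \<and> successively (\<noteq>) ws
           \<longrightarrow> (\<exists>x. word_disk ws \<subseteq> cball x t)"
proof -
  define F where "F = {p \<in> P. t \<le> snd p}"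
  obtain q where q: "0 \<le> q" "q < 1"
    "\<And>a b. a \<in> F \<Longrightarrow> b \<in> F \<Longrightarrow> a \<noteq> b \<Longrightarrow> refl_contraction a b \<le> q"
    using finite_separated_disks_contraction_bound[OF separated_disks_subset[OF sep] fin]
    unfolding F_def by blast
  define R where "R = Max (snd ` F)"
  have R: "snd p \<le> R" if "p \<in> F" for p
    using fin that by (simp add: R_def F_def)
  have "(\<lambda>n. q ^ n * R) \<longlonglongrightarrow> 0"
    using q tendsto_mult_right[OF LIMSEQ_power_zero, of q R] by simp
  then have "\<forall>\<^sub>F n in sequentially. q ^ n * R < t"
    using \<open>0 < t\<close> by (rule order_tendstoD(2))
  then obtain N where "\<forall>n\<ge>N. q ^ n * R < t"
    by (auto simp: eventually_sequentially)
  then have N: "q ^ N * R < t"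
    by simp
  show ?thesis
  proof (rule eventually_sequentiallyI[of N], intro allI impI, elim conjE)
    fix k ws assume k: "N \<le> k" and len: "length ws = Suc k" and ws: "set ws \<subseteq> P" "successively (\<noteq>) ws"
    then have "ws \<noteq> []" by auto
    show "\<exists>x. word_disk ws \<subseteq> cball x t"
    proof (cases "set ws \<subseteq> F")
      case True
      have "successively (\<lambda>a b. a \<noteq> b \<and> refl_contraction a b \<le> q) ws"
        using ws(2) by (rule successively_mono) (use True q(3) in blast)
      from word_disk_subset_cball[OF sep ws(1) this \<open>ws \<noteq> []\<close> q(1)]
      obtain x where x: "word_disk ws \<subseteq> cball x (q ^ k * snd (last ws))"
        using len by auto
      have "last ws \<in> F"
        using True \<open>ws \<noteq> []\<close> by auto
      then have "0 \<le> snd (last ws)" "snd (last ws) \<le> R"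
        using \<open>0 < t\<close> R by (simp_all add: F_def)
      then have "q ^ k * snd (last ws) \<le> q ^ N * R"
        using q k by (intro mult_mono power_decreasing) simp_all
      then have "cball x (q ^ k * snd (last ws)) \<subseteq> cball x t"
        using N by (intro subset_cball) linarith
      with x show ?thesis by blast
    next
      case False
      then obtain p where "p \<in> set ws" "snd p < t"
        using ws(1) by (force simp: F_def)
      then obtain us vs where "ws = us @ p # vs"
        by (meson split_list)
      then have us: "ws = (us @ [p]) @ vs"
        by simp
      then have "set (us @ [p]) \<subseteq> P" "successively (\<noteq>) (us @ [p])"
        using ws by (simp_all add: successively_append_iff)
      from this(2) have "successively (\<lambda>a b. a \<noteq> b \<and> refl_contraction a b \<le> 1) (us @ [p])"
        by (rule successively_mono)
          (use \<open>set (us @ [p]) \<subseteq> P\<close> in \<open>meson less_imp_le refl_contraction_lt_1[OF sep] subsetD\<close>)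
      from word_disk_subset_cball[OF sep \<open>set (us @ [p]) \<subseteq> P\<close> this _ zero_le_one]
      obtain x where "word_disk (us @ [p]) \<subseteq> cball x (snd p)"
        by auto
      moreover have "word_disk ws \<subseteq> word_disk (us @ [p])"
        unfolding us by (rule word_disk_append_subset[OF sep]) (use ws[unfolded us] in simp_all)
      moreover have "cball x (snd p) \<subseteq> cball x t"
        using \<open>snd p < t\<close> by (intro subset_cball) linarith
      ultimately show ?thesis by blast
    qed
  qed
qed

lemma emeasure_le_if_subset_cball:
  fixes S :: "complex set"
  assumes "S \<subseteq> cball x r" "0 \<le> r"
  shows "emeasure lborel S \<le> ennreal (pi * r\<^sup>2)"
proof -
  have "emeasure lborel S \<le> emeasure lborel (cball x r)"
    using assms(1) by (rule emeasure_mono) simp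
  also have "\<dots> = ennreal (pi * r\<^sup>2)"
    using assms(2) by (simp add: emeasure_cball unit_ball_vol_2)
  finally show ?thesis .
qed

lemma LIMSEQ_ennreal_zeroI:
  fixes f :: "nat \<Rightarrow> ennreal"
  assumes "\<And>e. 0 < e \<Longrightarrow> \<forall>\<^sub>F n in sequentially. f n \<le> ennreal e"
  shows "f \<longlonglongrightarrow> 0"
  unfolding order_tendsto_iff
proof (intro conjI allI impI)
  fix u :: ennreal assume "0 < u"
  then obtain y where y: "0 < y" "y < u"
    using dense by blast
  then have "y < top"
    using top.not_eq_extremum by fastforce
  define e where "e = enn2real y"
  have "0 < e" "ennreal e < u"
    using y \<open>y < top\<close> by (auto simp: e_def enn2real_positive_iff)
  show "\<forall>\<^sub>F n in sequentially. f n < u"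
    using assms[OF \<open>0 < e\<close>] by eventually_elim (use \<open>ennreal e < u\<close> in auto)
qed simp

theorem proposition7p3:
  fixes \<Omega> :: "complex set"
  assumes "circle_domain_inf \<Omega>"
  shows "(\<lambda>k. SUP ws \<in> {ws. length ws = Suc k \<and> set ws \<subseteq> boundary_circles \<Omega>
                              \<and> successively (\<noteq>) ws}.
               emeasure lborel (word_disk ws)) \<longlonglongrightarrow> 0"
proof (rule LIMSEQ_ennreal_zeroI)
  fix \<epsilon> :: real assume "0 < \<epsilon>"
  define t where "t = sqrt (\<epsilon> / pi)"
  have "0 < t" "pi * t\<^sup>2 = \<epsilon>"
    using \<open>0 < \<epsilon>\<close> by (simp_all add: t_def)
  from eventually_word_disks_in_small_cball[OF boundary_circles_separated[OF assms]
      finite_boundary_circles_radius_ge[OF assms \<open>0 < t\<close>] \<open>0 < t\<close>]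
  show "\<forall>\<^sub>F k in sequentially. (SUP ws \<in> {ws. length ws = Suc k \<and> set ws \<subseteq> boundary_circles \<Omega>
                              \<and> successively (\<noteq>) ws}. emeasure lborel (word_disk ws)) \<le> ennreal \<epsilon>"
    by eventually_elim
      (use \<open>0 < t\<close> \<open>pi * t\<^sup>2 = \<epsilon>\<close> in \<open>fastforce intro!: SUP_least dest: emeasure_le_if_subset_cball\<close>)
qed

end
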